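(* Let $\ket{W_4}=\frac12(|1000\rangle+|0100\rangle+|0010\rangle+|0001\rangle)$ and let $\mathcal G_{VI}$ be the graph on $\{A,B,C,D\}$ with edges $AB,AC,AD,BD$. Then $$\frac{3+\sqrt3}{6}\le P(W_4,\mathcal G_{VI}).$$
   Context: $P(\psi,\mathcal G)$: for a graph $\mathcal G=(V,E)$ on the four parties $A,B,C,D$ (each holding one qubit), the supremum over all LOCC protocols (local operations and classical communication, allowing arbitrarily many rounds) acting on a single copy of $\psi$ of $\sum_{(i,j)\in E}p_{ij}$, where $p_{ij}$ is the probability that the protocol ends with parties $i,j$ sharing a state local-unitarily equivalent to $\frac1{\sqrt2}(|00\rangle+|11\rangle)$ and all other parties in a product state. *)

theory Defs
  imports "HOL-Analysis.Analysis"
begin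

datatype party = A | B | C | D

lemma UNIV_party: "(UNIV :: party set) = {A, B, C, D}"
  using party.exhaust by auto

instance party :: finite
  by standard (simp add: UNIV_party)

text \<open>Computational basis of the four-qubit space: an assignment of a bit to each party.
  A (not necessarily normalised) state vector is a complex function on the basis.\<close>

type_synonym basis = "party \<Rightarrow> bool"
type_synonym state = "basis \<Rightarrow> complex"

text \<open>A single-qubit operator as a 2x2 matrix, indexed (output bit, input bit).\<close>
type_synonym qop = "bool \<Rightarrow> bool \<Rightarrow> complex"

definition nsq :: "state \<Rightarrow> real" where
  "nsq \<psi> = (\<Sum>x\<in>UNIV. (cmod (\<psi> x))\<^sup>2)"

definition apply_local :: "party \<Rightarrow> qop \<Rightarrow> state \<Rightarrow> state" where
  "apply_local k M \<psi> = (\<lambda>x. \<Sum>b\<in>UNIV. M (x k) b * \<psi> (x(k := b)))"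

definition apply_tensor :: "(party \<Rightarrow> qop) \<Rightarrow> state \<Rightarrow> state" where
  "apply_tensor U \<phi> = (\<lambda>x. \<Sum>y\<in>UNIV. (\<Prod>k\<in>UNIV. U k (x k) (y k)) * \<phi> y)"

definition unitary2 :: "qop \<Rightarrow> bool" where
  "unitary2 U \<longleftrightarrow> (\<forall>a c. (\<Sum>b\<in>UNIV. cnj (U b a) * U b c) = (if a = c then 1 else 0))"

definition complete_meas :: "qop list \<Rightarrow> bool" where
  "complete_meas Ms \<longleftrightarrow>
     (\<forall>a c. (\<Sum>M\<leftarrow>Ms. \<Sum>b\<in>UNIV. cnj (M b a) * M b c) = (if a = c then 1 else 0))"

definition bell_on :: "party \<Rightarrow> party \<Rightarrow> state" where
  "bell_on i j = (\<lambda>x. if x i = x j \<and> (\<forall>k. k \<noteq> i \<and> k \<noteq> j \<longrightarrow> \<not> x k)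
                      then complex_of_real (1 / sqrt 2) else 0)"

text \<open>Success for the pair (i,j): the (normalised) state is local-unitarily equivalent to
  the Bell state on i,j with all other parties in a product state (any product state of the
  other qubits is LU-equivalent to |0...0>). The scalar c absorbs norm and global phase.\<close>
definition success :: "party \<times> party \<Rightarrow> state \<Rightarrow> bool" where
  "success e \<psi> \<longleftrightarrow> fst e \<noteq> snd e \<and> \<psi> \<noteq> (\<lambda>_. 0) \<and>
     (\<exists>U c. (\<forall>k. unitary2 (U k)) \<and> \<psi> = (\<lambda>x. c * apply_tensor U (bell_on (fst e) (snd e)) x))"

text \<open>An LOCC protocol acting on a single copy: a finite tree. At each node one party performs
  a local measurement (a list of Kraus operators, one per outcome); the outcome is broadcast
  and the protocol continues with the subtree attached to that outcome (classical
  communication = dependence of all later steps on all earlier outcomes).\<close>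

datatype proto = Leaf | Node party "(qop \<times> proto) list"

fun valid :: "proto \<Rightarrow> bool" where
  "valid Leaf = True"
| "valid (Node k ch) = (complete_meas (map fst ch) \<and> (\<forall>p\<in>set ch. valid (snd p)))"

text \<open>Probability (given unnormalised branch state) that the protocol ends with success for e.\<close>
fun prob :: "proto \<Rightarrow> state \<Rightarrow> party \<times> party \<Rightarrow> real" where
  "prob Leaf \<psi> e = (if success e \<psi> then nsq \<psi> else 0)"
| "prob (Node k ch) \<psi> e = sum_list (map (\<lambda>p. prob (snd p) (apply_local k (fst p) \<psi>) e) ch)"

definition Pmax :: "state \<Rightarrow> (party \<times> party) set \<Rightarrow> ereal" where
  "Pmax \<psi> E = (SUP T\<in>{T. valid T}. ereal (\<Sum>e\<in>E. prob T \<psi> e))"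

definition W4 :: state where
  "W4 = (\<lambda>x. if card {k. x k} = 1 then complex_of_real (1/2) else 0)"

definition G_VI :: "(party \<times> party) set" where
  "G_VI = {(A, B), (A, C), (A, D), (B, D)}"

end

theory Submission
  imports Defs
begin

(* All protocols used are trees of two-outcome diagonal local filters diag(sqrt s, sqrt t).
   Such a filter maps a W-class state  sum_k sqrt(w k) |onehot k>  to another W-class state,
   merely reweighting the party that measured (factor t) against all others (factor s).
   Hence a protocol only moves around a nonnegative weight vector; whenever exactly two
   parties i, j with (i,j) an edge keep equal weight c, the branch is an (unnormalised)
   Bell pair on i, j, which contributes 2c to the success probability.

   Then two concrete protocols for
   G_VI are analysed: a triangle protocol on A, B, D distilling a pair from a W3 state with
   probability close to 1, and a cycle protocol on the full W4 state whose yield is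
   (3(1-p) eta + 4(1-p)p + 2(1-p)p^2)/4 * sum (p^3)^k, eta being the triangle efficiency.
   For p = (sqrt 3 - 1)/2 this tends to (3 + sqrt 3)/6, which gives the theorem. *)

section \<open>W-class states and diagonal local filters\<close>

definition onehot :: "party \<Rightarrow> basis" where
  "onehot k = (\<lambda>j. j = k)"

lemma onehot_eq_iff [simp]: "onehot j = onehot k \<longleftrightarrow> j = k"
  unfolding onehot_def by metis

definition wstate :: "(party \<Rightarrow> real) \<Rightarrow> state" where
  "wstate w = (\<lambda>x. \<Sum>k\<in>UNIV. if x = onehot k then complex_of_real (sqrt (w k)) else 0)"

lemma wstate_onehot [simp]: "wstate w (onehot j) = complex_of_real (sqrt (w j))"
  unfolding wstate_def by simp

lemma wstate_off: "(\<forall>k. x \<noteq> onehot k) \<Longrightarrow> wstate w x = 0"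
  unfolding wstate_def by simp

lemma nsq_wstate:
  assumes "\<And>k. w k \<ge> 0"
  shows "nsq (wstate w) = (\<Sum>k\<in>UNIV. w k)"
proof -
  have sq: "(cmod (wstate w x))\<^sup>2 = (\<Sum>k\<in>UNIV. if x = onehot k then w k else 0)" for x
  proof (cases "\<exists>j. x = onehot j")
    case True
    then obtain j where "x = onehot j" by blast
    then show ?thesis using assms[of j] by simp
  next
    case False
    then show ?thesis by (simp add: wstate_off)
  qed
  have "nsq (wstate w) = (\<Sum>k\<in>UNIV. \<Sum>x\<in>UNIV. if x = onehot k then w k else 0)"
    unfolding nsq_def sq by (rule sum.swap)
  then show ?thesis by simp
qed

lemma W4_wstate: "W4 = wstate (\<lambda>_. 1/4)"
proof (rule ext)
  fix x
  have half: "sqrt (1/4::real) = 1/2"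
    by (rule real_sqrt_unique) (auto simp: power2_eq_square)
  have card_one: "card {k. x k} = 1 \<longleftrightarrow> (\<exists>j. x = onehot j)"
  proof
    assume "card {k. x k} = 1"
    then obtain j where "{k. x k} = {j}" by (auto simp: card_1_singleton_iff)
    then have "x = onehot j" by (auto simp: onehot_def fun_eq_iff)
    then show "\<exists>j. x = onehot j" by blast
  next
    assume "\<exists>j. x = onehot j"
    then obtain j where "x = onehot j" by blast
    then have "{k. x k} = {j}" by (auto simp: onehot_def)
    then show "card {k. x k} = 1" by simp
  qed
  show "W4 x = wstate (\<lambda>_. 1/4) x"
  proof (cases "\<exists>j. x = onehot j")
    case True
    then obtain j where j: "x = onehot j" by blast
    then have "card {k. x k} = 1" using card_one by blast
    then show ?thesis unfolding W4_def j wstate_onehot half by simp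
  next
    case False
    then show ?thesis using card_one unfolding W4_def by (simp add: wstate_off)
  qed
qed

definition filt :: "real \<Rightarrow> real \<Rightarrow> qop" where
  "filt s t = (\<lambda>u i. if u = i then complex_of_real (sqrt (if u then t else s)) else 0)"

lemma apply_local_filt:
  "apply_local k (filt s t) \<psi> = (\<lambda>x. complex_of_real (sqrt (if x k then t else s)) * \<psi> x)"
proof (rule ext)
  fix x
  have bool: "(UNIV :: bool set) = {True, False}" by auto
  show "apply_local k (filt s t) \<psi> x = complex_of_real (sqrt (if x k then t else s)) * \<psi> x"
    unfolding apply_local_def filt_def bool by (cases "x k") (auto simp: fun_upd_idem)
qed

definition reweight :: "party \<Rightarrow> real \<Rightarrow> real \<Rightarrow> (party \<Rightarrow> real) \<Rightarrow> (party \<Rightarrow> real)" where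
  "reweight k s t w = (\<lambda>j. if j = k then t * w j else s * w j)"

lemma apply_local_filt_wstate:
  assumes "s \<ge> 0" "t \<ge> 0"
  shows "apply_local k (filt s t) (wstate w) = wstate (reweight k s t w)"
proof (rule ext)
  fix x
  show "apply_local k (filt s t) (wstate w) x = wstate (reweight k s t w) x"
  proof (cases "\<exists>j. x = onehot j")
    case True
    then obtain j where j: "x = onehot j" by blast
    have "onehot j k = (k = j)" by (simp add: onehot_def)
    then show ?thesis
      unfolding apply_local_filt j wstate_onehot reweight_def
      using assms by (auto simp: real_sqrt_mult)
  next
    case False
    then show ?thesis unfolding apply_local_filt by (simp add: wstate_off)
  qed
qed

lemma complete_meas_filt:
  assumes "s1 \<ge> 0" "s2 \<ge> 0" "t1 \<ge> 0" "t2 \<ge> 0" "s1 + s2 = 1" "t1 + t2 = 1"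
  shows "complete_meas [filt s1 t1, filt s2 t2]"
proof -
  have bool: "(UNIV :: bool set) = {True, False}" by auto
  have "complex_of_real (sqrt a) * complex_of_real (sqrt a)
        + complex_of_real (sqrt b) * complex_of_real (sqrt b) = 1"
    if "a \<ge> 0" "b \<ge> 0" "a + b = 1" for a b :: real
    using that by (simp flip: of_real_mult of_real_add)
  then show ?thesis unfolding complete_meas_def filt_def bool using assms by auto
qed

definition Iop :: qop where "Iop = (\<lambda>a b. if a = b then 1 else 0)"
definition Xop :: qop where "Xop = (\<lambda>a b. if a \<noteq> b then 1 else 0)"

lemma unitary_Iop: "unitary2 Iop"
  and unitary_Xop: "unitary2 Xop"
proof -
  have bool: "(UNIV :: bool set) = {True, False}" by auto
  show "unitary2 Iop" unfolding unitary2_def Iop_def bool by auto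
  show "unitary2 Xop" unfolding unitary2_def Xop_def bool by auto
qed

lemma apply_tensor_flip:
  "apply_tensor (\<lambda>k. if k = j then Xop else Iop) \<phi> x = \<phi> (x(j := \<not> x j))"
proof -
  have kernel: "(\<Prod>k\<in>UNIV. (if k = j then Xop else Iop) (x k) (y k))
      = (if y = x(j := \<not> x j) then 1 else 0)" for y
  proof (cases "y = x(j := \<not> x j)")
    case True
    then have "(if k = j then Xop else Iop) (x k) (y k) = 1" for k
      by (auto simp: Xop_def Iop_def)
    then show ?thesis using True by simp
  next
    case False
    then obtain k where "y k \<noteq> (x(j := \<not> x j)) k" unfolding fun_eq_iff by blast
    then have "(if k = j then Xop else Iop) (x k) (y k) = 0"
      by (auto simp: Xop_def Iop_def split: if_splits)
    then have "(\<Prod>k\<in>UNIV. (if k = j then Xop else Iop) (x k) (y k)) = 0"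
      by (intro prod_zero bexI[of _ k]) auto
    then show ?thesis using False by simp
  qed
  have "(\<Sum>y\<in>UNIV. (if y = x(j := \<not> x j) then 1 else 0) * \<phi> y)
      = (\<Sum>y\<in>UNIV. if y = x(j := \<not> x j) then \<phi> y else 0)"
    by (rule sum.cong) auto
  then have "(\<Sum>y\<in>UNIV. (if y = x(j := \<not> x j) then 1 else 0) * \<phi> y) = \<phi> (x(j := \<not> x j))"
    by simp
  then show ?thesis unfolding apply_tensor_def kernel .
qed

lemma wstate_pair:
  assumes ij: "i \<noteq> j" and wi: "w i = c" and wj: "w j = c"
    and others: "\<And>k. k \<noteq> i \<Longrightarrow> k \<noteq> j \<Longrightarrow> w k = 0"
  shows "wstate w x =
    (if x i \<noteq> x j \<and> (\<forall>k. k \<noteq> i \<and> k \<noteq> j \<longrightarrow> \<not> x k) then complex_of_real (sqrt c) else 0)"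
proof (cases "\<exists>k. x = onehot k")
  case True
  then obtain k where k: "x = onehot k" by blast
  show ?thesis unfolding k wstate_onehot using ij wi wj others[of k] by (auto simp: onehot_def)
next
  case False
  have "x \<noteq> onehot i" "x \<noteq> onehot j" using False by blast+
  then have "\<not> (x i \<noteq> x j \<and> (\<forall>k. k \<noteq> i \<and> k \<noteq> j \<longrightarrow> \<not> x k))"
    using ij by (auto simp: onehot_def fun_eq_iff)
  moreover have "wstate w x = 0" using False by (simp add: wstate_off)
  ultimately show ?thesis by (simp only: if_False)
qed

text \<open>Weight c on both i and j and nothing elsewhere is, up to X on j, the Bell state on i,j:
  the protocol succeeds for the pair (i,j).\<close>
lemma success_pair:
  assumes ij: "i \<noteq> j" and wi: "w i = c" and wj: "w j = c"
    and others: "\<And>k. k \<noteq> i \<Longrightarrow> k \<noteq> j \<Longrightarrow> w k = 0" and c: "c > 0"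
  shows "success (i, j) (wstate w)"
proof -
  define U where "U = (\<lambda>k. if k = j then Xop else Iop)"
  have unitary: "\<forall>k. unitary2 (U k)" unfolding U_def using unitary_Iop unitary_Xop by auto
  have "wstate w x = complex_of_real (sqrt (2 * c)) * apply_tensor U (bell_on i j) x" for x
  proof -
    define P where "P \<longleftrightarrow> x i \<noteq> x j \<and> (\<forall>k. k \<noteq> i \<and> k \<noteq> j \<longrightarrow> \<not> x k)"
    have "sqrt (2 * c) * (1 / sqrt 2) = sqrt c" by (simp add: real_sqrt_mult)
    then have amp: "complex_of_real (sqrt (2 * c)) * complex_of_real (1 / sqrt 2) = complex_of_real (sqrt c)"
      by (simp only: of_real_mult[symmetric])
    have pair: "wstate w x = (if P then complex_of_real (sqrt c) else 0)"
      unfolding P_def by (rule wstate_pair[OF ij wi wj others])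
    have "apply_tensor U (bell_on i j) x = bell_on i j (x(j := \<not> x j))"
      unfolding U_def by (rule apply_tensor_flip)
    also have "\<dots> = (if P then complex_of_real (1 / sqrt 2) else 0)"
      unfolding bell_on_def P_def using ij by auto
    finally show ?thesis unfolding pair using amp by simp
  qed
  moreover have "wstate w \<noteq> (\<lambda>_. 0)"
  proof
    assume "wstate w = (\<lambda>_. 0)"
    then have "wstate w (onehot i) = 0" by simp
    then show False using c wi by simp
  qed
  ultimately show ?thesis unfolding success_def using ij unitary by auto
qed

lemma prob_nonneg: "prob T \<psi> e \<ge> 0"
proof (induction T arbitrary: \<psi>)
  case Leaf
  then show ?case by (simp add: nsq_def sum_nonneg)
next
  case (Node k ch)
  then show ?case by (auto intro!: sum_list_nonneg)
qed

definition gain :: "(party \<times> party) set \<Rightarrow> proto \<Rightarrow> (party \<Rightarrow> real) \<Rightarrow> real" where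
  "gain E T w = (\<Sum>e\<in>E. prob T (wstate w) e)"

lemma gain_nonneg: "gain E T w \<ge> 0"
  unfolding gain_def by (simp add: sum_nonneg prob_nonneg)

lemma gain_filter_node:
  assumes "s1 \<ge> 0" "t1 \<ge> 0" "s2 \<ge> 0" "t2 \<ge> 0"
  shows "gain E (Node k [(filt s1 t1, T1), (filt s2 t2, T2)]) w
       = gain E T1 (reweight k s1 t1 w) + gain E T2 (reweight k s2 t2 w)"
  unfolding gain_def using assms by (simp add: apply_local_filt_wstate sum.distrib)

lemma valid_filter_node:
  assumes "s1 \<ge> 0" "s2 \<ge> 0" "t1 \<ge> 0" "t2 \<ge> 0" "s1 + s2 = 1" "t1 + t2 = 1" "valid T1" "valid T2"
  shows "valid (Node k [(filt s1 t1, T1), (filt s2 t2, T2)])"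
  using assms complete_meas_filt[OF assms(1-6)] by simp

lemma gain_leaf_pair:
  assumes E: "finite E" "(i, j) \<in> E" and ij: "i \<noteq> j" and wi: "w i = c" and wj: "w j = c"
    and others: "\<And>k. k \<noteq> i \<Longrightarrow> k \<noteq> j \<Longrightarrow> w k = 0" and c: "c \<ge> 0"
  shows "gain E Leaf w \<ge> 2 * c"
proof (cases "c = 0")
  case True
  then show ?thesis using gain_nonneg by simp
next
  case False
  have w_nonneg: "\<And>k. w k \<ge> 0" using wi wj others c by (metis order.refl)
  have "(\<Sum>k\<in>UNIV. w k) = (\<Sum>k\<in>{i, j}. w k)"
    by (rule sum.mono_neutral_right) (auto intro: others)
  then have "prob Leaf (wstate w) (i, j) = 2 * c"
    using success_pair[OF ij wi wj others] False c nsq_wstate[OF w_nonneg] wi wj ij by simp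
  moreover have "prob Leaf (wstate w) (i, j) \<le> gain E Leaf w"
    unfolding gain_def by (rule member_le_sum[OF E(2) _ E(1)], rule prob_nonneg)
  ultimately show ?thesis by simp
qed

definition wt :: "real \<Rightarrow> real \<Rightarrow> real \<Rightarrow> real \<Rightarrow> (party \<Rightarrow> real)" where
  "wt a b c d = (\<lambda>k. case k of A \<Rightarrow> a | B \<Rightarrow> b | C \<Rightarrow> c | D \<Rightarrow> d)"

lemma reweight_wt [simp]:
  "reweight A s t (wt a b c d) = wt (t*a) (s*b) (s*c) (s*d)"
  "reweight B s t (wt a b c d) = wt (s*a) (t*b) (s*c) (s*d)"
  "reweight C s t (wt a b c d) = wt (s*a) (s*b) (t*c) (s*d)"
  "reweight D s t (wt a b c d) = wt (s*a) (s*b) (s*c) (t*d)"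
  by (auto simp: reweight_def wt_def fun_eq_iff split: party.split)

lemmas gain_node_wt = gain_filter_node[where E = G_VI and w = "wt a b c d" for a b c d,
  unfolded reweight_wt]

lemma gain_leaf_edges:
  "b \<ge> 0 \<Longrightarrow> gain G_VI Leaf (wt 0 b 0 b) \<ge> 2 * b"
  "a \<ge> 0 \<Longrightarrow> gain G_VI Leaf (wt a 0 a 0) \<ge> 2 * a"
  "a \<ge> 0 \<Longrightarrow> gain G_VI Leaf (wt a a 0 0) \<ge> 2 * a"
  "a \<ge> 0 \<Longrightarrow> gain G_VI Leaf (wt a 0 0 a) \<ge> 2 * a"
  by (rule gain_leaf_pair; auto simp: G_VI_def wt_def split: party.split)+

section \<open>The triangle protocol on A, B, D\<close>

text \<open>On weights (t, t, 0, t) all three pairs AB, AD, BD are edges.  One round: A filters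
  with small strength e; if A is projected out, B and D share a pair.  Otherwise B filters;
  if B is projected out, A re-equalises with D (tri_fix_A); otherwise D filters, and either
  A, B share a pair or the weights are again (t', t', 0, t') with t' = (1-e)^2 t.\<close>

definition tri_fix_A :: "real \<Rightarrow> proto" where
  "tri_fix_A e = Node A [(filt 1 (1-e), Leaf), (filt 0 e, Leaf)]"

definition tri_D :: "real \<Rightarrow> proto \<Rightarrow> proto" where
  "tri_D e T = Node D [(filt e 0, Leaf), (filt (1-e) 1, T)]"

definition tri_B :: "real \<Rightarrow> proto \<Rightarrow> proto" where
  "tri_B e T = Node B [(filt e 0, tri_fix_A e), (filt (1-e) 1, tri_D e T)]"

fun triangle_proto :: "real \<Rightarrow> nat \<Rightarrow> proto" where
  "triangle_proto e 0 = Leaf"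
| "triangle_proto e (Suc m) =
     Node A [(filt e 0, Leaf), (filt (1-e) 1, tri_B e (triangle_proto e m))]"

lemma valid_triangle_proto: "0 \<le> e \<Longrightarrow> e \<le> 1 \<Longrightarrow> valid (triangle_proto e m)"
proof (induction m)
  case 0
  then show ?case by simp
next
  case (Suc m)
  have "valid (tri_fix_A e)" unfolding tri_fix_A_def by (rule valid_filter_node) (use Suc in auto)
  moreover have "valid (tri_D e (triangle_proto e m))"
    unfolding tri_D_def by (rule valid_filter_node) (use Suc in auto)
  ultimately have "valid (tri_B e (triangle_proto e m))"
    unfolding tri_B_def by (intro valid_filter_node) (use Suc in auto)
  then show ?case unfolding triangle_proto.simps by (intro valid_filter_node) (use Suc in auto)
qed

lemma gain_triangle_round:
  assumes e: "0 \<le> e" "e \<le> 1" and t: "t \<ge> 0"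
  shows "gain G_VI (triangle_proto e (Suc m)) (wt t t 0 t)
       \<ge> 2*e*t*(3 - 2*e) + gain G_VI (triangle_proto e m) (wt ((1-e)^2*t) ((1-e)^2*t) 0 ((1-e)^2*t))"
proof -
  let ?u = "(1-e)*t" and ?v = "(1-e)^2*t"
  have fix_A: "gain G_VI (tri_fix_A e) (wt (e*t) 0 0 (e*?u)) \<ge> 2*(e*?u)"
  proof -
    have "gain G_VI (tri_fix_A e) (wt (e*t) 0 0 (e*?u))
        = gain G_VI Leaf (wt (e*?u) 0 0 (e*?u)) + gain G_VI Leaf (wt (e*(e*t)) 0 0 0)"
      unfolding tri_fix_A_def using e by (simp add: gain_node_wt algebra_simps)
    moreover have "e*?u \<ge> 0" using e t by simp
    ultimately show ?thesis
      using gain_leaf_edges(4)[of "e*?u"] gain_nonneg[of G_VI Leaf "wt (e*(e*t)) 0 0 0"] by linarith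
  qed
  have tri_D: "gain G_VI (tri_D e (triangle_proto e m)) (wt ?u ?u 0 (?u*(1-e)))
      \<ge> 2*(e*?u) + gain G_VI (triangle_proto e m) (wt ?v ?v 0 ?v)"
  proof -
    have "gain G_VI (tri_D e (triangle_proto e m)) (wt ?u ?u 0 (?u*(1-e)))
        = gain G_VI Leaf (wt (e*?u) (e*?u) 0 0) + gain G_VI (triangle_proto e m) (wt ?v ?v 0 ?v)"
      unfolding tri_D_def using e by (simp add: gain_node_wt power2_eq_square algebra_simps)
    then show ?thesis using gain_leaf_edges(3)[of "e*?u"] e t by fastforce
  qed
  have "gain G_VI (triangle_proto e (Suc m)) (wt t t 0 t)
      = gain G_VI Leaf (wt 0 (e*t) 0 (e*t))
        + gain G_VI (tri_fix_A e) (wt (e*t) 0 0 (e*?u))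
        + gain G_VI (tri_D e (triangle_proto e m)) (wt ?u ?u 0 (?u*(1-e)))"
    unfolding triangle_proto.simps tri_B_def using e by (simp add: gain_node_wt algebra_simps)
  moreover have "gain G_VI Leaf (wt 0 (e*t) 0 (e*t)) \<ge> 2*(e*t)"
    using gain_leaf_edges(1) e t by simp
  ultimately show ?thesis using fix_A tri_D by (simp add: algebra_simps)
qed

text \<open>Triangle efficiency: from a W3 state of weight 3t, m rounds distil a pair with
  probability at least 3t (1-e)(1 - (1-e)^(2m)), which tends to 3t as e \<rightarrow> 0, m \<rightarrow> \<infinity>.\<close>
lemma gain_triangle:
  assumes e: "0 < e" "e \<le> 1" and t: "t \<ge> 0"
  shows "gain G_VI (triangle_proto e m) (wt t t 0 t) \<ge> 3*t*((1-e)*(1-((1-e)^2)^m))"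
proof -
  have sum_bound: "gain G_VI (triangle_proto e m) (wt t t 0 t) \<ge> 2*e*t*(3-2*e) * (\<Sum>k<m. ((1-e)^2)^k)"
    if "t \<ge> 0" for t
    using that
  proof (induction m arbitrary: t)
    case 0
    then show ?case using gain_nonneg by simp
  next
    case (Suc m)
    let ?S = "\<Sum>k<m. ((1-e)^2)^k"
    have "gain G_VI (triangle_proto e m) (wt ((1-e)^2*t) ((1-e)^2*t) 0 ((1-e)^2*t))
        \<ge> 2*e*((1-e)^2*t)*(3-2*e) * ?S"
      using Suc.IH[of "(1-e)^2*t"] Suc.prems by simp
    moreover have "(\<Sum>k<Suc m. ((1-e)^2)^k) = 1 + (1-e)^2 * ?S"
      by (subst sum.lessThan_Suc_shift) (simp add: sum_distrib_left)
    ultimately show ?case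
      using gain_triangle_round[of e t m] e Suc.prems by (simp add: algebra_simps)
  qed
  define S where "S = (\<Sum>k<m. ((1-e)^2)^k)"
  have "S \<ge> 0" unfolding S_def by (simp add: sum_nonneg)
  have geometric: "1 - ((1-e)^2)^m = e*(2-e)*S"
    using one_diff_power_eq[of "(1-e)^2" m] unfolding S_def by (simp add: power2_eq_square algebra_simps)
  have "2*e*t*(3-2*e) * S - 3*t*((1-e)*(1-((1-e)^2)^m)) = (e*t*S)*(e*(5-3*e))"
    unfolding geometric by (simp add: algebra_simps)
  moreover have "(e*t*S)*(e*(5-3*e)) \<ge> 0"
    using e t \<open>S \<ge> 0\<close> by (intro mult_nonneg_nonneg) auto
  ultimately show ?thesis using sum_bound[OF t] unfolding S_def by linarith
qed

section \<open>The cycle protocol on the W4 state\<close>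

text \<open>Measuring a party in the computational basis discards it.\<close>
definition discard :: "party \<Rightarrow> proto" where
  "discard k = Node k [(filt 1 0, Leaf), (filt 0 1, Leaf)]"

text \<open>Starting from weights (t, t, t, t): C filters with strength 1-p.  If C is projected out,
  the rest is a W3 state on the triangle A, B, D.  Otherwise A, then B, then D filter in turn;
  each projection onto 0 leaves (after discarding a third party) a pair on BD, AC, AB
  respectively, and if all four parties pass, the weights are uniform again, scaled by p^3.\<close>

definition cyc_D :: "real \<Rightarrow> proto \<Rightarrow> proto" where
  "cyc_D p T = Node D [(filt (1-p) 0, discard C), (filt p 1, T)]"

definition cyc_B :: "real \<Rightarrow> proto \<Rightarrow> proto" where
  "cyc_B p T = Node B [(filt (1-p) 0, discard D), (filt p 1, cyc_D p T)]"

definition cyc_A :: "real \<Rightarrow> proto \<Rightarrow> proto" where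
  "cyc_A p T = Node A [(filt (1-p) 0, discard C), (filt p 1, cyc_B p T)]"

fun cycle_proto :: "real \<Rightarrow> real \<Rightarrow> nat \<Rightarrow> nat \<Rightarrow> proto" where
  "cycle_proto p e m 0 = Leaf"
| "cycle_proto p e m (Suc n) =
     Node C [(filt (1-p) 0, triangle_proto e m), (filt p 1, cyc_A p (cycle_proto p e m n))]"

lemma valid_discard: "valid (discard k)"
  unfolding discard_def by (rule valid_filter_node) auto

lemma valid_cycle_proto:
  "0 \<le> p \<Longrightarrow> p \<le> 1 \<Longrightarrow> 0 \<le> e \<Longrightarrow> e \<le> 1 \<Longrightarrow> valid (cycle_proto p e m n)"
proof (induction n)
  case 0
  then show ?case by simp
next
  case (Suc n)
  have "valid (cyc_D p (cycle_proto p e m n))"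
    unfolding cyc_D_def by (rule valid_filter_node) (use Suc valid_discard in auto)
  then have "valid (cyc_B p (cycle_proto p e m n))"
    unfolding cyc_B_def by (intro valid_filter_node) (use Suc valid_discard in auto)
  then have "valid (cyc_A p (cycle_proto p e m n))"
    unfolding cyc_A_def by (intro valid_filter_node) (use Suc valid_discard in auto)
  then show ?case
    unfolding cycle_proto.simps by (intro valid_filter_node) (use Suc valid_triangle_proto in auto)
qed

text \<open>Discarding a party: the branch where it is found in 0 keeps the other weights unchanged,
  the other branch can only add to the gain.\<close>
lemma gain_discard:
  "gain G_VI (discard C) (wt a b c d) \<ge> gain G_VI Leaf (wt a b 0 d)"
  "gain G_VI (discard D) (wt a b c d) \<ge> gain G_VI Leaf (wt a b c 0)"
  by (simp_all add: discard_def gain_node_wt gain_nonneg)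

lemma gain_cyc_A:
  assumes p: "0 \<le> p" "p \<le> 1" and t: "t \<ge> 0"
  shows "gain G_VI (cyc_A p T) (wt (p*t) (p*t) t (p*t))
       \<ge> 4*(1-p)*p*t + 2*(1-p)*p^2*t + gain G_VI T (wt (p^3*t) (p^3*t) (p^3*t) (p^3*t))"
proof -
  let ?q = "(1-p)*p*t" and ?r = "(1-p)*p^2*t"
  have q: "?q \<ge> 0" and r: "?r \<ge> 0" using p t by simp_all
  have BD: "gain G_VI (discard C) (wt 0 ?q ((1-p)*t) ?q) \<ge> 2*?q"
    by (rule order_trans[OF gain_leaf_edges(1)[OF q] gain_discard(1)])
  have AC: "gain G_VI (discard D) (wt ?q 0 ?q ((1-p)*p^2*t)) \<ge> 2*?q"
    by (rule order_trans[OF gain_leaf_edges(2)[OF q] gain_discard(2)])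
  have AB: "gain G_VI (discard C) (wt ?r ?r ?r 0) \<ge> 2*?r"
    by (rule order_trans[OF gain_leaf_edges(3)[OF r] gain_discard(1)])
  have "gain G_VI (cyc_A p T) (wt (p*t) (p*t) t (p*t))
      = gain G_VI (discard C) (wt 0 ?q ((1-p)*t) ?q) + gain G_VI (discard D) (wt ?q 0 ?q ((1-p)*p^2*t))
        + gain G_VI (discard C) (wt ?r ?r ?r 0) + gain G_VI T (wt (p^3*t) (p^3*t) (p^3*t) (p^3*t))"
    unfolding cyc_A_def cyc_B_def cyc_D_def using p
    by (simp add: gain_node_wt power2_eq_square power3_eq_cube algebra_simps)
  moreover have "4*(1-p)*p*t + 2*(1-p)*p^2*t = 2*?q + 2*?q + 2*?r" by (simp add: algebra_simps)
  ultimately show ?thesis using BD AC AB by linarith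
qed

lemma gain_cycle:
  fixes m :: nat
  assumes p: "0 \<le> p" "p \<le> 1" and e: "0 < e" "e \<le> 1" and t: "t \<ge> 0"
  defines "\<eta> \<equiv> (1-e)*(1-((1-e)^2)^m)"
  shows "gain G_VI (cycle_proto p e m n) (wt t t t t)
       \<ge> t * (3*(1-p)*\<eta> + 4*(1-p)*p + 2*(1-p)*p^2) * (\<Sum>k<n. (p^3)^k)"
  using t
proof (induction n arbitrary: t)
  case 0
  then show ?case using gain_nonneg by simp
next
  case (Suc n)
  let ?g = "3*(1-p)*\<eta> + 4*(1-p)*p + 2*(1-p)*p^2" and ?S = "\<Sum>k<n. (p^3)^k"
  have "gain G_VI (cycle_proto p e m (Suc n)) (wt t t t t)
      = gain G_VI (triangle_proto e m) (wt ((1-p)*t) ((1-p)*t) 0 ((1-p)*t))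
        + gain G_VI (cyc_A p (cycle_proto p e m n)) (wt (p*t) (p*t) t (p*t))"
    using p by (simp add: gain_node_wt)
  moreover have "gain G_VI (triangle_proto e m) (wt ((1-p)*t) ((1-p)*t) 0 ((1-p)*t)) \<ge> 3*((1-p)*t)*\<eta>"
    unfolding \<eta>_def by (rule gain_triangle) (use e p Suc.prems in auto)
  moreover have "gain G_VI (cycle_proto p e m n) (wt (p^3*t) (p^3*t) (p^3*t) (p^3*t)) \<ge> p^3*t * ?g * ?S"
    using Suc.IH[of "p^3*t"] p Suc.prems by simp
  moreover have "(\<Sum>k<Suc n. (p^3)^k) = 1 + p^3 * ?S"
    by (subst sum.lessThan_Suc_shift) (simp add: sum_distrib_left)
  ultimately show ?case
    using gain_cyc_A[OF p Suc.prems, of "cycle_proto p e m n"] by (simp add: algebra_simps)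
qed

text \<open>For p = (sqrt 3 - 1)/2 the yield per unit weight of an ideal round, divided by the
  weight 1 - p^3 it consumes, equals (3 + sqrt 3)/6.\<close>
lemma optimal_p:
  defines "p \<equiv> (sqrt 3 - 1) / 2"
  shows "0 < p" "p < 1"
    and "(1/4) * (3*(1-p) + 4*(1-p)*p + 2*(1-p)*p^2) = ((3 + sqrt 3)/6) * (1 - p^3)"
proof -
  define r where "r = sqrt (3::real)"
  have rr: "r * r = 3" and r1: "1 < r" and r2: "r < 3"
    unfolding r_def by (simp_all add: real_sqrt_less_iff[of 3 9, simplified])
  have pr: "p = (r - 1)/2" unfolding p_def r_def ..
  show "0 < p" "p < 1" using r1 r2 unfolding pr by auto
  have p2: "p^2 = (2 - r)/2" unfolding pr using rr by (simp add: power2_eq_square field_simps)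
  have p3: "p^3 = (3*r - 5)/4" unfolding pr using rr
    by (simp add: power3_eq_cube field_simps)
  show "(1/4) * (3*(1-p) + 4*(1-p)*p + 2*(1-p)*p^2) = ((3 + sqrt 3)/6) * (1 - p^3)"
    unfolding p2 p3 r_def[symmetric] unfolding pr using rr by (simp add: field_simps algebra_simps)
qed

lemma gain_cycle_optimal:
  defines "p \<equiv> (sqrt 3 - 1) / 2"
  assumes e: "0 < e" "e \<le> 1"
  shows "gain G_VI (cycle_proto p e m n) (\<lambda>_. 1/4)
       \<ge> (3 + sqrt 3)/6 * ((1-e)*(1-((1-e)^2)^m)) * (1 - (p^3)^n)"
proof -
  define \<eta> where "\<eta> = (1-e)*(1-((1-e)^2)^m)"
  define S where "S = (\<Sum>k<n. (p^3)^k)"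
  have p: "0 < p" "p < 1" unfolding p_def using optimal_p by auto
  have uniform: "(\<lambda>_. 1/4) = wt (1/4) (1/4) (1/4) (1/4)"
    by (auto simp: wt_def fun_eq_iff split: party.split)
  have "\<eta> \<le> 1" "S \<ge> 0"
    unfolding \<eta>_def S_def using e p by (auto intro!: mult_le_one power_le_one sum_nonneg)
  let ?X = "4*(1-p)*p + 2*(1-p)*p^2"
  have "(3 + sqrt 3)/6 * \<eta> * (1 - (p^3)^n) = \<eta> * ((3 + sqrt 3)/6 * (1 - p^3)) * S"
    unfolding S_def one_diff_power_eq[of "p^3" n] by (simp only: ac_simps)
  also have "\<dots> = \<eta> * ((1/4) * (3*(1-p) + ?X)) * S"
    using optimal_p(3) unfolding p_def by (simp only: add.assoc)
  also have "\<dots> \<le> (1/4) * (3*(1-p)*\<eta> + ?X) * S"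
  proof -
    have "(1/4) * (3*(1-p)*\<eta> + ?X) * S - \<eta> * ((1/4) * (3*(1-p) + ?X)) * S
        = (1/4) * (1-\<eta>) * ?X * S"
      by algebra
    moreover have "(1/4) * (1-\<eta>) * ?X * S \<ge> 0"
      using \<open>\<eta> \<le> 1\<close> \<open>S \<ge> 0\<close> p by (intro mult_nonneg_nonneg) auto
    ultimately show ?thesis by linarith
  qed
  also have "\<dots> \<le> gain G_VI (cycle_proto p e m n) (\<lambda>_. 1/4)"
    using gain_cycle[of p e "1/4" m n] p e unfolding uniform \<eta>_def S_def by (simp add: add.assoc)
  finally show ?thesis unfolding \<eta>_def .
qed

lemma efficiency_approaches_one:
  fixes q r :: real
  assumes q: "0 \<le> q" "q < 1" and r: "r < 1"
  shows "\<exists>e m n. 0 < e \<and> e \<le> 1 \<and> r < (1-e) * (1 - ((1-e)^2)^m) * (1 - q^n)"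
proof -
  define \<delta> where "\<delta> = (1 - max r 0) / 4"
  have d0: "0 < \<delta>" and d1: "\<delta> \<le> 1/4" unfolding \<delta>_def using r by auto
  have "(1-\<delta>)^2 < 1" using d0 d1 by (simp add: power_less_one_iff)
  then obtain m where m: "((1-\<delta>)^2)^m < \<delta>" using real_arch_pow_inv[OF d0] by blast
  obtain n where n: "q^n < \<delta>" using real_arch_pow_inv[OF d0 q(2)] by blast
  have "(1-\<delta>)*(1-\<delta>)*(1-\<delta>) \<le> (1-\<delta>) * (1 - ((1-\<delta>)^2)^m) * (1 - q^n)"
    using m n d0 d1 by (intro mult_mono) auto
  moreover have "(1-\<delta>)*(1-\<delta>)*(1-\<delta>) = 1 - 3*\<delta> + \<delta>*\<delta>*(3-\<delta>)"
    by (simp add: algebra_simps)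
  moreover have "\<delta>*\<delta>*(3-\<delta>) \<ge> 0" using d0 d1 by simp
  moreover have "1 - 3*\<delta> > r" unfolding \<delta>_def using r by (cases "r \<le> 0") (auto simp: max_def field_simps)
  ultimately have "r < (1-\<delta>) * (1 - ((1-\<delta>)^2)^m) * (1 - q^n)" by linarith
  then show ?thesis using d0 d1 by (intro exI[of _ \<delta>] exI[of _ m] exI[of _ n]) auto
qed

lemma Pmax_lower_bound:
  assumes "\<And>y. y < x \<Longrightarrow> \<exists>T. valid T \<and> y < (\<Sum>e\<in>E. prob T \<psi> e)"
  shows "ereal x \<le> Pmax \<psi> E"
  unfolding Pmax_def
proof (subst le_SUP_iff, intro allI impI)
  fix y :: ereal
  assume y: "y < ereal x"
  obtain r where r: "r < x" "y \<le> ereal r"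
  proof (cases y)
    case (real r)
    then show ?thesis using that y by auto
  next
    case PInf
    then show ?thesis using y by simp
  next
    case MInf
    then show ?thesis using that[of "x - 1"] by simp
  qed
  then obtain T where T: "valid T" "r < (\<Sum>e\<in>E. prob T \<psi> e)" using assms by blast
  then have "y < ereal (\<Sum>e\<in>E. prob T \<psi> e)" using r(2) by (simp add: le_less_trans)
  then show "\<exists>T\<in>{T. valid T}. y < ereal (\<Sum>e\<in>E. prob T \<psi> e)" using T(1) by blast
qed

theorem mainTheorem4:
  shows "ereal ((3 + sqrt 3) / 6) \<le> Pmax W4 G_VI"
proof (rule Pmax_lower_bound)
  fix y :: real
  assume y: "y < (3 + sqrt 3) / 6"
  define \<tau> :: real where "\<tau> = (3 + sqrt 3) / 6"
  define p :: real where "p = (sqrt 3 - 1) / 2"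
  have "\<tau> > 0" unfolding \<tau>_def by (simp add: add_pos_nonneg)
  have p: "0 < p" "p < 1" unfolding p_def using optimal_p by auto
  then have "0 \<le> p^3" "p^3 < 1" by (simp_all add: power_less_one_iff)
  then obtain e m n where e: "0 < e" "e \<le> 1"
    and close: "y / \<tau> < (1-e) * (1 - ((1-e)^2)^m) * (1 - (p^3)^n)"
    using efficiency_approaches_one[of "p^3" "y / \<tau>"] y \<open>\<tau> > 0\<close> unfolding \<tau>_def by auto
  have "y < \<tau> * ((1-e) * (1 - ((1-e)^2)^m) * (1 - (p^3)^n))"
    using close \<open>\<tau> > 0\<close> by (simp add: pos_divide_less_eq mult.commute)
  also have "\<dots> \<le> gain G_VI (cycle_proto p e m n) (\<lambda>_. 1/4)"
    using gain_cycle_optimal[OF e, of m n] unfolding \<tau>_def p_def by (simp add: mult.assoc)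
  finally show "\<exists>T. valid T \<and> y < (\<Sum>e\<in>G_VI. prob T W4 e)"
    using valid_cycle_proto[of p e m n] p e unfolding gain_def W4_wstate by auto
qed

end
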